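(* Let $(f_n)_{n=1}^\infty$ be a sequence of meromorphic functions on $\mathbb{C}$ and let $F^n=f_n\circ\dots\circ f_1$. Suppose $\xi\in\mathbb{C}$ is a point for which there exist a sequence $\xi_k\to\xi$ with $\xi_k\neq\xi$ and a subsequence $(n_j)_{j=1}^\infty$ such that $$\lim_{j\to\infty}|(F^{n_j})'(\xi_k)|=\infty,$$ where the sequence $(F^{n_j}(\xi_k))_{j=1}^\infty$ is bounded for every $k\geq 1$. Then $\xi\in\mathcal{J}(F)$.
   Context: The non-autonomous Fatou set $\mathcal{F}(F)$ is the set of points $z\in\mathbb{C}$ having a neighborhood on which all iterates $F^n$ are defined and form a normal family; the non-autonomous Julia set is $\mathcal{J}(F)=\mathbb{C}\setminus\mathcal{F}(F)$. *)

theory Defs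
  imports "HOL-Complex_Analysis.Complex_Analysis"
begin

text \<open>A meromorphic function on the whole plane: meromorphic in the library sense, and
  analytic (with its actual values) away from its poles, so no removable singularities
  carry wrong values.\<close>
definition merom_plane :: "(complex \<Rightarrow> complex) \<Rightarrow> bool" where
  "merom_plane g \<longleftrightarrow> g meromorphic_on UNIV \<and> g analytic_on {z. \<not> is_pole g z}"

text \<open>Non-autonomous iterates: the sequence is indexed from 1 (f 0 is unused);
  iter f 0 = id and iter f (Suc n) = f (Suc n) o iter f n, i.e. F^n = f_n o ... o f_1.\<close>
fun iter :: "(nat \<Rightarrow> complex \<Rightarrow> complex) \<Rightarrow> nat \<Rightarrow> complex \<Rightarrow> complex" where
  "iter f 0 = (\<lambda>z. z)"
| "iter f (Suc n) = (\<lambda>z. f (Suc n) (iter f n z))"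

definition iter_defined :: "(nat \<Rightarrow> complex \<Rightarrow> complex) \<Rightarrow> nat \<Rightarrow> complex \<Rightarrow> bool" where
  "iter_defined f n z \<longleftrightarrow> (\<forall>m<n. \<not> is_pole (f (Suc m)) (iter f m z))"

definition normal_family :: "complex set \<Rightarrow> (nat \<Rightarrow> complex \<Rightarrow> complex) \<Rightarrow> bool" where
  "normal_family U g \<longleftrightarrow>
     (\<forall>r :: nat \<Rightarrow> nat. \<exists>s :: nat \<Rightarrow> nat. strict_mono s \<and>
        ((\<exists>h. \<forall>K. K \<subseteq> U \<and> compact K \<longrightarrow>
                 uniform_limit K (\<lambda>n. g (r (s n))) h sequentially)
         \<or> (\<forall>K. K \<subseteq> U \<and> compact K \<longrightarrow>
                 (\<forall>B. eventually (\<lambda>n. \<forall>z\<in>K. B \<le> norm (g (r (s n)) z)) sequentially))))"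

definition fatou_set :: "(nat \<Rightarrow> complex \<Rightarrow> complex) \<Rightarrow> complex set" where
  "fatou_set f = {z. \<exists>U. open U \<and> z \<in> U \<and> (\<forall>n. \<forall>w\<in>U. iter_defined f n w)
                        \<and> normal_family U (iter f)}"

definition julia_set :: "(nat \<Rightarrow> complex \<Rightarrow> complex) \<Rightarrow> complex set" where
  "julia_set f = UNIV - fatou_set f"

end

theory Submission
  imports Defs
begin

(* If \<xi> were in the Fatou set, the iterates would be holomorphic and normal on a
   neighbourhood U of \<xi>, which contains some xs k. A subsequence of the F^(nj j) then
   converges locally uniformly on U or diverges locally uniformly to infinity. The first
   alternative makes the derivatives at xs k converge (Weierstrass), contradicting their
   blow-up; the second contradicts the boundedness of the orbit of xs k. *)

lemma iter_analytic_on: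
  assumes "\<forall>n\<ge>1. merom_plane (f n)"
    and "\<forall>w\<in>U. iter_defined f n w"
  shows "iter f n analytic_on U"
  using assms(2)
proof (induction n)
  case 0
  then show ?case by simp
next
  case (Suc n)
  have "iter f n analytic_on U"
    using Suc unfolding iter_defined_def by auto
  moreover have "f (Suc n) analytic_on {z. \<not> is_pole (f (Suc n)) z}"
    using assms(1) unfolding merom_plane_def by auto
  moreover have "\<And>z. z \<in> U \<Longrightarrow> iter f n z \<in> {z. \<not> is_pole (f (Suc n)) z}"
    using Suc.prems unfolding iter_defined_def by auto
  ultimately have "f (Suc n) \<circ> iter f n analytic_on U"
    using analytic_on_compose_gen by blast
  then show ?case by (simp add: o_def)
qed

lemma uniform_limit_on_compacts_deriv_convergent:
  assumes "open U" and "\<And>n. g n holomorphic_on U"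
    and "\<And>K. K \<subseteq> U \<Longrightarrow> compact K \<Longrightarrow> uniform_limit K g h sequentially"
    and "x \<in> U"
  shows "convergent (\<lambda>n. deriv (g n) x)"
proof -
  have "\<And>n x. x \<in> U \<Longrightarrow> (g n has_field_derivative deriv (g n) x) (at x)"
    using assms(1,2) holomorphic_derivI by blast
  moreover have "\<exists>d>0. cball x d \<subseteq> U \<and> uniform_limit (cball x d) g h sequentially"
    if "x \<in> U" for x
  proof -
    obtain d where "d > 0" "cball x d \<subseteq> U"
      using \<open>open U\<close> \<open>x \<in> U\<close> open_contains_cball by blast
    then show ?thesis
      using assms(3)[OF _ compact_cball] by blast
  qed
  ultimately obtain g' where "\<forall>x\<in>U. (h has_field_derivative g' x) (at x) \<and>
      ((\<lambda>n. deriv (g n) x) \<longlongrightarrow> g' x) sequentially"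
    using has_complex_derivative_uniform_sequence[OF assms(1), of g "\<lambda>n. deriv (g n)" h]
    by blast
  then show ?thesis
    using assms(4) convergent_def by blast
qed

lemma normal_family_no_bounded_orbit_with_deriv_blowup:
  assumes "open U" and "\<And>n. g n holomorphic_on U" and "normal_family U g"
    and "x \<in> U" and "strict_mono r"
    and "bounded (range (\<lambda>j. g (r j) x))"
    and "filterlim (\<lambda>j. norm (deriv (g (r j)) x)) at_top sequentially"
  shows False
proof -
  obtain s where "strict_mono s" and alternative:
    "(\<exists>h. \<forall>K. K \<subseteq> U \<and> compact K \<longrightarrow> uniform_limit K (\<lambda>n. g (r (s n))) h sequentially)
     \<or> (\<forall>K. K \<subseteq> U \<and> compact K \<longrightarrow>
          (\<forall>B. eventually (\<lambda>n. \<forall>z\<in>K. B \<le> norm (g (r (s n)) z)) sequentially))"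
    using assms(3) unfolding normal_family_def by blast
  then consider
      (converges) h where
        "\<And>K. K \<subseteq> U \<Longrightarrow> compact K \<Longrightarrow> uniform_limit K (\<lambda>n. g (r (s n))) h sequentially"
    | (diverges) "\<And>K B. K \<subseteq> U \<Longrightarrow> compact K \<Longrightarrow>
        eventually (\<lambda>n. \<forall>z\<in>K. B \<le> norm (g (r (s n)) z)) sequentially"
    by blast
  then show False
  proof cases
    case converges
    have "convergent (\<lambda>n. deriv (g (r (s n))) x)"
      using assms(1,2,4) converges
      by (intro uniform_limit_on_compacts_deriv_convergent[where g = "\<lambda>n. g (r (s n))"])
    then obtain L where "(\<lambda>n. deriv (g (r (s n))) x) \<longlonglongrightarrow> L"
      unfolding convergent_def by blast
    moreover have "filterlim (\<lambda>n. deriv (g (r (s n))) x) at_infinity sequentially"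
      using filterlim_compose[OF assms(7) filterlim_subseq[OF \<open>strict_mono s\<close>]]
      by (intro filterlim_norm_at_top_imp_at_infinity) simp
    ultimately show False
      using not_tendsto_and_filterlim_at_infinity[OF trivial_limit_sequentially] by blast
  next
    case diverges
    obtain M where M: "\<And>j. norm (g (r j) x) \<le> M"
      using assms(6) unfolding bounded_iff by blast
    have "eventually (\<lambda>n. M + 1 \<le> norm (g (r (s n)) x)) sequentially"
      using diverges[of "{x}" "M + 1"] assms(4) by simp
    then obtain n where "M + 1 \<le> norm (g (r (s n)) x)"
      unfolding eventually_sequentially by blast
    with M[of "s n"] show False
      by linarith
  qed
qed

theorem lemma2p5:
  fixes f :: "nat \<Rightarrow> complex \<Rightarrow> complex" and \<xi> :: complex
    and xs :: "nat \<Rightarrow> complex" and nj :: "nat \<Rightarrow> nat"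
  assumes "\<forall>n\<ge>1. merom_plane (f n)"
    and "xs \<longlonglongrightarrow> \<xi>" and "\<forall>k. xs k \<noteq> \<xi>"
    and "strict_mono nj"
    and "\<forall>k j. iter_defined f (nj j) (xs k)"
    and "\<forall>k. bounded (range (\<lambda>j. iter f (nj j) (xs k)))"
    and "\<forall>k. filterlim (\<lambda>j. norm (deriv (iter f (nj j)) (xs k))) at_top sequentially"
  shows "\<xi> \<in> julia_set f"
proof (rule ccontr)
  assume "\<xi> \<notin> julia_set f"
  then obtain U where "open U" "\<xi> \<in> U" and defined: "\<forall>n. \<forall>w\<in>U. iter_defined f n w"
    and normal: "normal_family U (iter f)"
    unfolding julia_set_def fatou_set_def by auto
  have holomorphic: "\<And>n. iter f n holomorphic_on U"
    using iter_analytic_on[OF assms(1)] defined analytic_imp_holomorphic by blast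
  obtain k where "xs k \<in> U"
    using topological_tendstoD[OF assms(2) \<open>open U\<close> \<open>\<xi> \<in> U\<close>]
    by (meson eventually_sequentially order_refl)
  then show False
    using normal_family_no_bounded_orbit_with_deriv_blowup[OF \<open>open U\<close> holomorphic normal
        _ assms(4)] assms(6,7) by blast
qed

end
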